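(* There exists an absolute constant $\tau_0>1$ such that for every $\tau\in(1,\tau_0)$ there exists a compact set $K\subset\mathbb{R}$ with Newhouse thickness $\tau(K)=\tau$, having a unique largest bounded gap, such that $K$ contains no configuration of the form $\{x-t,\,x,\,x+t^2\}$ with $t>0$ and $x$ one of the two endpoints of the largest gap of $K$.
   Context: For a compact set $K\subset\mathbb{R}$, a gap of $K$ is a connected component of $\mathbb{R}\setminus K$. If $u$ is the right endpoint of a bounded gap $G$, the bridge at $u$ is the maximal interval $B=[u,v]$ such that every gap $G'$ of $K$ with $G'\subset B$ satisfies $|G'|\le|G|$; bridges at left endpoints of bounded gaps are defined symmetrically (maximal intervals $[v,u]$ with the same property). For such an endpoint $u$, set $\tau(K,u)=|B|/|G|$. The Newhouse thickness of $K$ is $\tau(K)=\inf_u\tau(K,u)$, the infimum over all endpoints $u$ of bounded gaps of $K$. *)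

theory Defs
  imports "HOL-Analysis.Analysis"
begin

definition gaps :: "real set \<Rightarrow> real set set" where
  "gaps K = components (- K)"

definition bounded_gaps :: "real set \<Rightarrow> real set set" where
  "bounded_gaps K = {G \<in> gaps K. bounded G}"

definition gap_len :: "real set \<Rightarrow> real" where
  "gap_len G = Sup G - Inf G"

definition right_bridge_len :: "real set \<Rightarrow> real set \<Rightarrow> real" where
  "right_bridge_len K G = Sup {v - Sup G | v. v \<in> K \<and> Sup G \<le> v \<and>
      (\<forall>G' \<in> gaps K. G' \<subseteq> {Sup G..v} \<longrightarrow> gap_len G' \<le> gap_len G)}"

definition left_bridge_len :: "real set \<Rightarrow> real set \<Rightarrow> real" where
  "left_bridge_len K G = Sup {Inf G - v | v. v \<in> K \<and> v \<le> Inf G \<and>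
      (\<forall>G' \<in> gaps K. G' \<subseteq> {v..Inf G} \<longrightarrow> gap_len G' \<le> gap_len G)}"

definition newhouse_thickness :: "real set \<Rightarrow> real" where
  "newhouse_thickness K =
     Inf ((\<lambda>G. right_bridge_len K G / gap_len G) ` bounded_gaps K \<union>
          (\<lambda>G. left_bridge_len K G / gap_len G) ` bounded_gaps K)"

end

theory Submission
  imports Defs
begin

(* For 0 < a < 0.269 let K = [-3.4,-1.9] \<union> [-0.99,-0.52] \<union> [-a,0] \<union> [1,1.99] \<union> [2.62,3.3].
  Its bounded gaps have lengths 0.91, 0.52 - a, 1 and 0.63, so (0,1) is the unique largest one.
  The bridge at -a is [-a,0], stopped by the longer gap (0,1); it gives the ratio a/(0.52 - a),
  and every other bridge ratio is at least 68/63, so the thickness is a/(0.52 - a), which sweeps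
  (1, 21/20) as a runs through an interval just above 0.26.
  At x = 0, -t \<in> K forces t \<le> 0.99 or t \<ge> 1.9, so t^2 < 1 or t^2 > 3.3, whereas t^2 \<in> K
  needs 1 \<le> t^2 \<le> 3.3. At x = 1, 1 - t \<in> K forces t^2 \<in> [1,1.62) or t^2 > 2.3, whereas
  1 + t^2 \<in> K needs t^2 \<le> 0.99 or 1.62 \<le> t^2 \<le> 2.3. *)

lemma in_components_realI:
  fixes S C :: "real set"
  assumes "C \<noteq> {}" "C \<subseteq> S" "connected C"
    and separated: "\<And>x y. x \<in> C \<Longrightarrow> y \<notin> C \<Longrightarrow> \<exists>z\<in>closed_segment x y. z \<notin> S"
  shows "C \<in> components S"
  unfolding in_components_maximal
proof (intro conjI assms allI impI)
  fix D assume D: "D \<noteq> {} \<and> C \<subseteq> D \<and> D \<subseteq> S \<and> connected D"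
  show "D = C"
  proof (rule ccontr)
    assume "D \<noteq> C"
    with D obtain y where "y \<in> D" "y \<notin> C" by blast
    moreover obtain x where "x \<in> C" using assms(1) by blast
    ultimately obtain z where "z \<in> closed_segment x y" "z \<notin> S"
      using separated by blast
    moreover have "closed_segment x y \<subseteq> D"
      using D \<open>x \<in> C\<close> \<open>y \<in> D\<close>
      by (intro closed_segment_subset)
        (auto simp flip: is_interval_convex_1 is_interval_connected_1)
    ultimately show False using D by blast
  qed
qed

lemma greaterThanLessThan_in_components:
  fixes S :: "real set"
  assumes "a < b" "{a<..<b} \<subseteq> S" "a \<notin> S" "b \<notin> S"
  shows "{a<..<b} \<in> components S"
proof (rule in_components_realI)
  fix x y assume "x \<in> {a<..<b}" "y \<notin> {a<..<b}"
  then show "\<exists>z\<in>closed_segment x y. z \<notin> S"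
    using assms by (intro bexI[of _ "if y \<le> a then a else b"])
      (auto simp: closed_segment_eq_real_ivl)
qed (use assms in auto)

lemma lessThan_in_components:
  fixes S :: "real set"
  assumes "{..<a} \<subseteq> S" "a \<notin> S"
  shows "{..<a} \<in> components S"
proof (rule in_components_realI)
  fix x y assume "x \<in> {..<a}" "y \<notin> {..<a}"
  then show "\<exists>z\<in>closed_segment x y. z \<notin> S"
    using assms by (intro bexI[of _ a]) (auto simp: closed_segment_eq_real_ivl)
qed (use assms in \<open>auto simp: lt_ex\<close>)

lemma greaterThan_in_components:
  fixes S :: "real set"
  assumes "{b<..} \<subseteq> S" "b \<notin> S"
  shows "{b<..} \<in> components S"
proof (rule in_components_realI)
  fix x y assume "x \<in> {b<..}" "y \<notin> {b<..}"
  then show "\<exists>z\<in>closed_segment x y. z \<notin> S"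
    using assms by (intro bexI[of _ b]) (auto simp: closed_segment_eq_real_ivl)
qed (use assms in \<open>auto simp: gt_ex\<close>)

lemma components_eqI:
  assumes "\<F> \<subseteq> components S" "S \<subseteq> \<Union>\<F>"
  shows "components S = \<F>"
proof
  show "components S \<subseteq> \<F>"
  proof
    fix C assume C: "C \<in> components S"
    then obtain x where "x \<in> C" using in_components_nonempty by blast
    moreover from this C obtain D where "D \<in> \<F>" "x \<in> D"
      using assms(2) in_components_subset by blast
    ultimately show "C \<in> \<F>"
      using C assms(1) components_eq by blast
  qed
qed (fact assms(1))

lemma not_bounded_lessThan: "\<not> bounded {..<c::real}"
proof
  assume "bounded {..<c}"
  then obtain m where "\<And>x. x < c \<Longrightarrow> m \<le> x"
    by (metis bounded_imp_bdd_below bdd_below.E lessThan_iff)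
  then have "m \<le> min m c - 1" by (simp add: min_def)
  then show False by simp
qed

lemma not_bounded_greaterThan: "\<not> bounded {c::real<..}"
proof
  assume "bounded {c<..}"
  then obtain m where "\<And>x. c < x \<Longrightarrow> x \<le> m"
    by (metis bounded_imp_bdd_above bdd_above.E greaterThan_iff)
  then have "max m c + 1 \<le> m" by (simp add: max_def)
  then show False by simp
qed

lemma gap_len_greaterThanLessThan: "a < b \<Longrightarrow> gap_len {a<..<b} = b - (a::real)"
  by (simp add: gap_len_def)

lemma gap_len_pos:
  assumes "closed K" "G \<in> bounded_gaps K"
  shows "0 < gap_len G"
proof -
  have G: "G \<in> components (- K)" "bounded G"
    using assms(2) by (auto simp: bounded_gaps_def gaps_def)
  then have "open G"
    using assms(1) open_components by blast
  obtain x where "x \<in> G" using G in_components_nonempty by blast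
  with \<open>open G\<close> obtain e where "e > 0" "ball x e \<subseteq> G"
    using openE by blast
  then have "x - e/2 \<in> G" "x + e/2 \<in> G"
    by (auto simp: dist_real_def)
  then have "Inf G \<le> x - e/2" "x + e/2 \<le> Sup G"
    using G(2)
    by (auto intro: cInf_lower cSup_upper bounded_imp_bdd_below bounded_imp_bdd_above)
  then show ?thesis
    using \<open>e > 0\<close> by (simp add: gap_len_def)
qed

lemma right_bridge_len_ge:
  assumes "bounded K" "w \<in> K" "Sup G \<le> w"
    and "\<And>G'. G' \<in> bounded_gaps K \<Longrightarrow> G' \<subseteq> {Sup G..w} \<Longrightarrow>
      gap_len G' \<le> gap_len G"
  shows "w - Sup G \<le> right_bridge_len K G"
  unfolding right_bridge_len_def
proof (rule cSup_upper)
  show "w - Sup G \<in> {v - Sup G |v. v \<in> K \<and> Sup G \<le> v \<and>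
      (\<forall>G' \<in> gaps K. G' \<subseteq> {Sup G..v} \<longrightarrow> gap_len G' \<le> gap_len G)}"
    using assms bounded_subset[OF compact_imp_bounded[OF compact_Icc]]
    by (auto simp: bounded_gaps_def)
  obtain M where "\<And>v. v \<in> K \<Longrightarrow> v \<le> M"
    by (metis assms(1) bounded_imp_bdd_above bdd_above.E)
  then show "bdd_above {v - Sup G |v. v \<in> K \<and> Sup G \<le> v \<and>
      (\<forall>G' \<in> gaps K. G' \<subseteq> {Sup G..v} \<longrightarrow> gap_len G' \<le> gap_len G)}"
    by (intro bdd_aboveI[of _ "M - Sup G"]) force
qed

lemma left_bridge_len_ge:
  assumes "bounded K" "w \<in> K" "w \<le> Inf G"
    and "\<And>G'. G' \<in> bounded_gaps K \<Longrightarrow> G' \<subseteq> {w..Inf G} \<Longrightarrow>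
      gap_len G' \<le> gap_len G"
  shows "Inf G - w \<le> left_bridge_len K G"
  unfolding left_bridge_len_def
proof (rule cSup_upper)
  show "Inf G - w \<in> {Inf G - v |v. v \<in> K \<and> v \<le> Inf G \<and>
      (\<forall>G' \<in> gaps K. G' \<subseteq> {v..Inf G} \<longrightarrow> gap_len G' \<le> gap_len G)}"
    using assms bounded_subset[OF compact_imp_bounded[OF compact_Icc]]
    by (auto simp: bounded_gaps_def)
  obtain m where "\<And>v. v \<in> K \<Longrightarrow> m \<le> v"
    by (metis assms(1) bounded_imp_bdd_below bdd_below.E)
  then show "bdd_above {Inf G - v |v. v \<in> K \<and> v \<le> Inf G \<and>
      (\<forall>G' \<in> gaps K. G' \<subseteq> {v..Inf G} \<longrightarrow> gap_len G' \<le> gap_len G)}"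
    by (intro bdd_aboveI[of _ "Inf G - m"]) force
qed

lemma right_bridge_len_eq:
  assumes "w \<in> K" "Sup G \<le> w"
    and "\<And>G'. G' \<in> bounded_gaps K \<Longrightarrow> G' \<subseteq> {Sup G..w} \<Longrightarrow>
      gap_len G' \<le> gap_len G"
    and long: "{w<..<w'} \<in> gaps K" "gap_len G < w' - w"
  shows "right_bridge_len K G = w - Sup G"
  unfolding right_bridge_len_def
proof (rule cSup_eq_maximum)
  show "w - Sup G \<in> {v - Sup G |v. v \<in> K \<and> Sup G \<le> v \<and>
      (\<forall>G' \<in> gaps K. G' \<subseteq> {Sup G..v} \<longrightarrow> gap_len G' \<le> gap_len G)}"
    using assms(1-3) bounded_subset[OF compact_imp_bounded[OF compact_Icc]]
    by (auto simp: bounded_gaps_def)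
next
  have "w < w'" "{w<..<w'} \<inter> K = {}"
    using in_components_nonempty[of _ "- K"] in_components_subset[of _ "- K"] long(1)
    by (fastforce simp: gaps_def)+
  fix x assume "x \<in> {v - Sup G |v. v \<in> K \<and> Sup G \<le> v \<and>
      (\<forall>G' \<in> gaps K. G' \<subseteq> {Sup G..v} \<longrightarrow> gap_len G' \<le> gap_len G)}"
  then obtain v where v: "x = v - Sup G" "v \<in> K"
    "\<forall>G' \<in> gaps K. G' \<subseteq> {Sup G..v} \<longrightarrow> gap_len G' \<le> gap_len G" by blast
  have "\<not> w < v"
  proof
    assume "w < v"
    with \<open>{w<..<w'} \<inter> K = {}\<close> \<open>v \<in> K\<close> have "w' \<le> v"
      by (meson disjoint_iff greaterThanLessThan_iff not_le)
    then have "{w<..<w'} \<subseteq> {Sup G..v}"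
      using assms(2) by auto
    with v(3) long \<open>w < w'\<close> show False
      by (fastforce simp: gap_len_greaterThanLessThan)
  qed
  then show "x \<le> w - Sup G" using v(1) by simp
qed

lemma newhouse_thickness_eqI:
  assumes "closed K" "G\<^sub>0 \<in> bounded_gaps K" "right_bridge_len K G\<^sub>0 = \<tau> * gap_len G\<^sub>0"
    and "\<And>G. G \<in> bounded_gaps K \<Longrightarrow> \<tau> * gap_len G \<le> right_bridge_len K G"
    and "\<And>G. G \<in> bounded_gaps K \<Longrightarrow> \<tau> * gap_len G \<le> left_bridge_len K G"
  shows "newhouse_thickness K = \<tau>"
  unfolding newhouse_thickness_def
proof (rule cInf_eq_minimum)
  show "\<tau> \<in> (\<lambda>G. right_bridge_len K G / gap_len G) ` bounded_gaps K \<union>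
      (\<lambda>G. left_bridge_len K G / gap_len G) ` bounded_gaps K"
    using assms(1-3) gap_len_pos[of K G\<^sub>0] by force
  show "\<tau> \<le> x" if "x \<in> (\<lambda>G. right_bridge_len K G / gap_len G) ` bounded_gaps K \<union>
      (\<lambda>G. left_bridge_len K G / gap_len G) ` bounded_gaps K" for x
    using that assms(1,4,5) gap_len_pos[of K] by (auto simp: pos_le_divide_eq)
qed

definition five_intervals :: "real \<Rightarrow> real set" where
  "five_intervals a =
     {-17/5..-19/10} \<union> {-99/100..-13/25} \<union> {-a..0} \<union> {1..199/100} \<union> {131/50..33/10}"

lemma compact_five_intervals: "compact (five_intervals a)"
  unfolding five_intervals_def by (intro compact_Un compact_Icc)

lemma mem_five_intervals:
  "x \<in> five_intervals a \<longleftrightarrow> -17/5 \<le> x \<and> x \<le> -19/10 \<or> -99/100 \<le> x \<and> x \<le> -13/25 \<or>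
     -a \<le> x \<and> x \<le> 0 \<or> 1 \<le> x \<and> x \<le> 199/100 \<or> 131/50 \<le> x \<and> x \<le> 33/10"
  by (auto simp: five_intervals_def)

context
  fixes a :: real
  assumes a: "0 < a" "a < 269/1000"
begin

lemma gaps_five_intervals:
  "gaps (five_intervals a) = {{..< -17/5}, {-19/10<..< -99/100}, {-13/25<..< -a}, {0<..<1},
      {199/100<..<131/50}, {33/10<..}}"
  unfolding gaps_def
proof (rule components_eqI)
  show "- five_intervals a \<subseteq> \<Union> {{..< -17/5}, {-19/10<..< -99/100}, {-13/25<..< -a}, {0<..<1},
      {199/100<..<131/50}, {33/10<..}}"
    by (auto simp: five_intervals_def)
qed (use a in \<open>auto simp: five_intervals_def
      intro!: greaterThanLessThan_in_components lessThan_in_components greaterThan_in_components\<close>)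

lemma bounded_gaps_five_intervals:
  "bounded_gaps (five_intervals a) =
     {{-19/10<..< -99/100}, {-13/25<..< -a}, {0<..<1}, {199/100<..<131/50}}"
  unfolding bounded_gaps_def gaps_five_intervals
  by (auto simp: not_bounded_lessThan not_bounded_greaterThan)

lemma bridges_five_intervals:
  shows "99/100 \<le> right_bridge_len (five_intervals a) {-19/10<..< -99/100}"
    and "right_bridge_len (five_intervals a) {-13/25<..< -a} = a"
    and "23/10 \<le> right_bridge_len (five_intervals a) {0<..<1}"
    and "17/25 \<le> right_bridge_len (five_intervals a) {199/100<..<131/50}"
    and "3/2 \<le> left_bridge_len (five_intervals a) {-19/10<..< -99/100}"
    and "47/100 \<le> left_bridge_len (five_intervals a) {-13/25<..< -a}"
    and "17/5 \<le> left_bridge_len (five_intervals a) {0<..<1}"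
    and "99/100 \<le> left_bridge_len (five_intervals a) {199/100<..<131/50}"
proof -
  note bridge_simps = compact_imp_bounded[OF compact_five_intervals] mem_five_intervals
    bounded_gaps_five_intervals gaps_five_intervals gap_len_greaterThanLessThan
    greaterThanLessThan_subseteq_atLeastAtMost_iff
  show "99/100 \<le> right_bridge_len (five_intervals a) {-19/10<..< -99/100}"
    by (rule order_trans[OF _ right_bridge_len_ge[where w=0]]) 
      (use a in \<open>auto simp: bridge_simps\<close>)
  show "right_bridge_len (five_intervals a) {-13/25<..< -a} = a"
    by (rule trans[OF right_bridge_len_eq[where w=0 and w'=1]]) 
      (use a in \<open>auto simp: bridge_simps\<close>)
  show "23/10 \<le> right_bridge_len (five_intervals a) {0<..<1}"
    by (rule order_trans[OF _ right_bridge_len_ge[where w="33/10"]]) 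
      (use a in \<open>auto simp: bridge_simps\<close>)
  show "17/25 \<le> right_bridge_len (five_intervals a) {199/100<..<131/50}"
    by (rule order_trans[OF _ right_bridge_len_ge[where w="33/10"]]) 
      (use a in \<open>auto simp: bridge_simps\<close>)
  show "3/2 \<le> left_bridge_len (five_intervals a) {-19/10<..< -99/100}"
    by (rule order_trans[OF _ left_bridge_len_ge[where w="-17/5"]]) 
      (use a in \<open>auto simp: bridge_simps\<close>)
  show "47/100 \<le> left_bridge_len (five_intervals a) {-13/25<..< -a}"
    by (rule order_trans[OF _ left_bridge_len_ge[where w="-99/100"]]) 
      (use a in \<open>auto simp: bridge_simps\<close>)
  show "17/5 \<le> left_bridge_len (five_intervals a) {0<..<1}"
    by (rule order_trans[OF _ left_bridge_len_ge[where w="-17/5"]]) 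
      (use a in \<open>auto simp: bridge_simps\<close>)
  show "99/100 \<le> left_bridge_len (five_intervals a) {199/100<..<131/50}"
    by (rule order_trans[OF _ left_bridge_len_ge[where w=1]]) 
      (use a in \<open>auto simp: bridge_simps\<close>)
qed

lemma newhouse_thickness_five_intervals:
  assumes \<tau>_gap: "\<tau> * (13/25 - a) = a"
  shows "newhouse_thickness (five_intervals a) = \<tau>"
proof (rule newhouse_thickness_eqI)
  have lens: "gap_len {-19/10<..< -99/100} = 91/100" "gap_len {-13/25<..< -a} = 13/25 - a"
    "gap_len {0<..<1} = 1" "gap_len {199/100<..<131/50} = 63/100"
    using a by (simp_all add: gap_len_greaterThanLessThan)
  have "\<tau> = a / (13/25 - a)"
    using a \<tau>_gap by (simp add: eq_divide_eq)
  then have \<tau>_le: "\<tau> \<le> 68/63"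
    using a by (simp add: pos_divide_le_eq)
  show "closed (five_intervals a)"
    by (rule compact_imp_closed[OF compact_five_intervals])
  show "{-13/25<..< -a} \<in> bounded_gaps (five_intervals a)"
    by (simp add: bounded_gaps_five_intervals)
  show "right_bridge_len (five_intervals a) {-13/25<..< -a} = \<tau> * gap_len {-13/25<..< -a}"
    using \<tau>_gap bridges_five_intervals(2) lens(2) by simp
  fix G assume "G \<in> bounded_gaps (five_intervals a)"
  then have "G = {-19/10<..< -99/100} \<or> G = {-13/25<..< -a} \<or> G = {0<..<1} \<or>
      G = {199/100<..<131/50}"
    by (simp add: bounded_gaps_five_intervals)
  then show "\<tau> * gap_len G \<le> right_bridge_len (five_intervals a) G"
    and "\<tau> * gap_len G \<le> left_bridge_len (five_intervals a) G"
    using lens bridges_five_intervals \<tau>_gap \<tau>_le a by (elim disjE; simp only:; linarith)+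
qed

lemma no_square_configuration_at_0:
  assumes "0 < t" "-t \<in> five_intervals a" "t^2 \<in> five_intervals a"
  shows False
proof -
  have "0 < t^2" using assms(1) by simp
  with assms(3) have "1 \<le> t^2 \<and> t^2 \<le> 33/10"
    unfolding mem_five_intervals by linarith
  moreover have "t^2 < 1 \<or> 33/10 < t^2"
  proof -
    consider "t \<le> 99/100" | "19/10 \<le> t"
      using assms(1,2) a unfolding mem_five_intervals by linarith
    then show ?thesis
    proof cases
      case 1
      then have "t^2 \<le> (99/100)^2" using assms(1) by (intro power_mono) auto
      then show ?thesis by (simp add: power2_eq_square)
    next
      case 2
      then have "(19/10)^2 \<le> t^2" by (intro power_mono) auto
      then show ?thesis by (simp add: power2_eq_square)
    qed
  qed
  ultimately show False by linarith
qed

lemma no_square_configuration_at_1: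
  assumes "0 < t" "1 - t \<in> five_intervals a" "1 + t^2 \<in> five_intervals a"
  shows False
proof -
  have "0 < t^2" using assms(1) by simp
  with assms(3) have "t^2 \<le> 99/100 \<or> 81/50 \<le> t^2 \<and> t^2 \<le> 23/10"
    unfolding mem_five_intervals by linarith
  moreover have "1 \<le> t^2 \<and> t^2 < 81/50 \<or> 23/10 < t^2"
  proof -
    consider "1 \<le> t" "t \<le> 1 + a" | "38/25 \<le> t"
      using assms(1,2) a unfolding mem_five_intervals by linarith
    then show ?thesis
    proof cases
      case 1
      with a have "1 \<le> t" "t \<le> 1269/1000" by linarith+
      then have "1 \<le> t^2" "t^2 \<le> (1269/1000)^2"
        by (auto intro: power_mono simp: one_le_power)
      then show ?thesis by (simp add: power2_eq_square)
    next
      case 2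
      then have "(38/25)^2 \<le> t^2" by (intro power_mono) auto
      then show ?thesis by (simp add: power2_eq_square)
    qed
  qed
  ultimately show False by linarith
qed

end

theorem mainTheorem6:
  shows "\<exists>\<tau>0::real. \<tau>0 > 1 \<and>
     (\<forall>\<tau>::real. 1 < \<tau> \<and> \<tau> < \<tau>0 \<longrightarrow>
       (\<exists>K::real set. compact K \<and> newhouse_thickness K = \<tau> \<and>
          (\<exists>G \<in> bounded_gaps K.
             (\<forall>G' \<in> bounded_gaps K. G' \<noteq> G \<longrightarrow> gap_len G' < gap_len G) \<and>
             \<not> (\<exists>t::real. t > 0 \<and> (\<exists>x \<in> {Inf G, Sup G}.
                    x - t \<in> K \<and> x \<in> K \<and> x + t ^ 2 \<in> K)))))"
proof (intro exI[of _ "21/20"] conjI allI impI, goal_cases)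
  case (2 \<tau>)
  define a where "a = 13 * \<tau> / (25 * (1 + \<tau>))"
  have a: "0 < a" "a < 269/1000" "\<tau> * (13/25 - a) = a"
    using 2 by (auto simp: a_def field_simps)
  show ?case
    using a no_square_configuration_at_0 no_square_configuration_at_1
    by (intro exI[of _ "five_intervals a"] bexI[of _ "{0<..<1}"] conjI)
      (auto simp: compact_five_intervals newhouse_thickness_five_intervals
        bounded_gaps_five_intervals gap_len_greaterThanLessThan)
qed simp

end
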